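(* Let $\mathcal{H}\in\mathbb{R}_D^{[2,2]}$ and write its Hermitian flattening matrix as $\mathfrak{m}(\mathcal{H})=\begin{pmatrix}A&C\\C&B\end{pmatrix}$ with $A,B,C$ real symmetric $2\times 2$ matrices. Then $\operatorname{hrank}_{\mathbb{R}}(\mathcal{H})\le 5$. Moreover, if one of $A,B$ is positive definite (or negative definite), or if $A=B=0$, then $\operatorname{hrank}(\mathcal{H})=\operatorname{hrank}_{\mathbb{R}}(\mathcal{H})\le 4$.
   Context: $\mathbb{C}^{[n_1,n_2]}$ is the real vector space of tensors $\mathcal{H}\in\mathbb{C}^{n_1\times n_2\times n_1\times n_2}$ with $\mathcal{H}_{i_1i_2j_1j_2}=\overline{\mathcal{H}_{j_1j_2i_1i_2}}$. For $v_i\in\mathbb{C}^{n_i}$, $[v_1,v_2]_{\otimes h}:=v_1\otimes v_2\otimes\overline{v_1}\otimes\overline{v_2}$. The Hermitian rank $\operatorname{hrank}(\mathcal{H})$ is the smallest $r$ with $\mathcal{H}=\sum_{i=1}^r\lambda_i[u_i^1,u_i^2]_{\otimes h}$, $\lambda_i\in\mathbb{R}$, $u_i^j\in\mathbb{C}^{n_j}$. $\mathbb{R}_D^{[2,2]}$ is the set of real tensors in $\mathbb{C}^{[2,2]}$ that can be written as $\sum_i\lambda_i[u_i^1,u_i^2]_{\otimes h}$ with $\lambda_i\in\mathbb{R}$ and real vectors $u_i^j\in\mathbb{R}^2$; for such $\mathcal{H}$, $\operatorname{hrank}_{\mathbb{R}}(\mathcal{H})$ is the smallest length of such a decomposition with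 real vectors. The Hermitian flattening $\mathfrak{m}(\mathcal{H})$ is the $4\times4$ matrix with $(\mathfrak{m}(\mathcal{H}))_{(i_1,i_2),(j_1,j_2)}=\mathcal{H}_{i_1i_2j_1j_2}$, rows and columns indexed by pairs in lexicographic order $(1,1),(1,2),(2,1),(2,2)$; equivalently $\mathfrak{m}$ is linear with $\mathfrak{m}([v_1,v_2]_{\otimes h})=(v_1v_1^* )\boxtimes(v_2v_2^* )$, $\boxtimes$ the Kronecker product. Thus $A$ is the block with $i_1=j_1=1$, $B$ the block with $i_1=j_1=2$, $C$ the block with $i_1=1,j_1=2$. *)

theory Defs
  imports "HOL-Analysis.Analysis"
begin

type_synonym tensor22 = "complex^2^2^2^2"

definition hermitian22 :: "tensor22 \<Rightarrow> bool" where
  "hermitian22 H \<longleftrightarrow> (\<forall>i1 i2 j1 j2. H$i1$i2$j1$j2 = cnj (H$j1$j2$i1$i2))"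

definition herm_prod :: "complex^2 \<Rightarrow> complex^2 \<Rightarrow> tensor22" where
  "herm_prod v1 v2 = (\<chi> i1 i2 j1 j2. v1$i1 * v2$i2 * cnj (v1$j1) * cnj (v2$j2))"

definition cvec :: "real^2 \<Rightarrow> complex^2" where
  "cvec u = (\<chi> i. complex_of_real (u$i))"

definition hrank :: "tensor22 \<Rightarrow> nat" where
  "hrank H = (LEAST r. \<exists>(lam::nat \<Rightarrow> real) (u1::nat \<Rightarrow> complex^2) (u2::nat \<Rightarrow> complex^2).
      H = (\<Sum>i<r. lam i *\<^sub>R herm_prod (u1 i) (u2 i)))"

definition hrank_R :: "tensor22 \<Rightarrow> nat" where
  "hrank_R H = (LEAST r. \<exists>(lam::nat \<Rightarrow> real) (u1::nat \<Rightarrow> real^2) (u2::nat \<Rightarrow> real^2).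
      H = (\<Sum>i<r. lam i *\<^sub>R herm_prod (cvec (u1 i)) (cvec (u2 i))))"

definition RD22 :: "tensor22 set" where
  "RD22 = {H. hermitian22 H \<and> (\<forall>i1 i2 j1 j2. Im (H$i1$i2$j1$j2) = 0) \<and>
      (\<exists>r (lam::nat \<Rightarrow> real) (u1::nat \<Rightarrow> real^2) (u2::nat \<Rightarrow> real^2).
         H = (\<Sum>i<r. lam i *\<^sub>R herm_prod (cvec (u1 i)) (cvec (u2 i))))}"

definition hflat :: "tensor22 \<Rightarrow> (2 \<times> 2) \<Rightarrow> (2 \<times> 2) \<Rightarrow> complex" where
  "hflat H = (\<lambda>(i1,i2) (j1,j2). H$i1$i2$j1$j2)"

text \<open>Diagonal block k of m(H) (i1 = j1 = k), as a real 2x2 matrix (H real).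
  A = flat_block H 1, B = flat_block H 2; C is the block i1 = 1, j1 = 2.\<close>
definition flat_block :: "tensor22 \<Rightarrow> 2 \<Rightarrow> 2 \<Rightarrow> real^2^2" where
  "flat_block H k l = (\<chi> i j. Re (hflat H (k,i) (l,j)))"

definition pos_def :: "real^2^2 \<Rightarrow> bool" where
  "pos_def M \<longleftrightarrow> (\<forall>x. x \<noteq> 0 \<longrightarrow> x \<bullet> (M *v x) > 0)"

definition neg_def :: "real^2^2 \<Rightarrow> bool" where
  "neg_def M \<longleftrightarrow> (\<forall>x. x \<noteq> 0 \<longrightarrow> x \<bullet> (M *v x) < 0)"

end

theory Submission
  imports Defs "HOL-Library.Quadratic_Discriminant"
begin

text \<open>
  A real decomposition H = sum lam_i [x_i, y_i] amounts to writing the blocks as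
  A = sum lam_i x_i1^2 y_i y_i^T, B = sum lam_i x_i2^2 y_i y_i^T and
  C = sum lam_i x_i1 x_i2 y_i y_i^T.
  If det A > 0, the pencil C - g A has a real singular member, so A and C are simultaneously
  diagonal in a basis z, w, and B minus the matching diagonal part is a sum of at most two
  rank-one terms; this gives at most four terms [(1, g_k), z_k] and [(0, 1), v_j].
  If A = B = 0, each rank-one term c v v^T of C is c/2 ([(1, 1), v] - [(1, -1), v]).
  In general a rank-one update makes a nonzero A or B have positive determinant, at the cost
  of one extra term, whence the bound 5.

  For the lower bound: when the matrices x_i y_i^T of a real decomposition of length n are
  linearly independent, a biorthogonal family Z_l diagonalizes the bilinear form of m(H) with
  nonzero diagonal, and this forces every complex decomposition to have at least n terms.
\<close>

definition herm_decomp :: "tensor22 \<Rightarrow> nat \<Rightarrow> bool" where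
  "herm_decomp H n \<longleftrightarrow> (\<exists>(lam::nat \<Rightarrow> real) (u1::nat \<Rightarrow> complex^2) (u2::nat \<Rightarrow> complex^2).
      H = (\<Sum>i<n. lam i *\<^sub>R herm_prod (u1 i) (u2 i)))"

definition real_decomp :: "tensor22 \<Rightarrow> nat \<Rightarrow> bool" where
  "real_decomp H n \<longleftrightarrow> (\<exists>(lam::nat \<Rightarrow> real) (u1::nat \<Rightarrow> real^2) (u2::nat \<Rightarrow> real^2).
      H = (\<Sum>i<n. lam i *\<^sub>R herm_prod (cvec (u1 i)) (cvec (u2 i))))"

lemma hrank_eq_Least: "hrank H = (LEAST n. herm_decomp H n)"
  by (simp add: hrank_def herm_decomp_def)

lemma hrank_R_eq_Least: "hrank_R H = (LEAST n. real_decomp H n)"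
  by (simp add: hrank_R_def real_decomp_def)

lemma herm_decomp_if_real_decomp: "real_decomp H n \<Longrightarrow> herm_decomp H n"
  unfolding real_decomp_def herm_decomp_def by (metis (no_types))

lemma hrank_le: "herm_decomp H n \<Longrightarrow> hrank H \<le> n"
  unfolding hrank_eq_Least by (rule Least_le)

lemma hrank_R_le: "real_decomp H n \<Longrightarrow> hrank_R H \<le> n"
  unfolding hrank_R_eq_Least by (rule Least_le)

lemma hrank_le_hrank_R: "real_decomp H n \<Longrightarrow> hrank H \<le> hrank_R H"
  unfolding hrank_R_eq_Least by (rule hrank_le, rule herm_decomp_if_real_decomp, rule LeastI)

lemma real_decomp_add_single:
  assumes "real_decomp H n"
  shows "real_decomp (H + c *\<^sub>R herm_prod (cvec x) (cvec y)) (Suc n)"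
proof -
  obtain lam u1 u2 where H: "H = (\<Sum>i<n. lam i *\<^sub>R herm_prod (cvec (u1 i)) (cvec (u2 i)))"
    using assms by (auto simp: real_decomp_def)
  have "H + c *\<^sub>R herm_prod (cvec x) (cvec y) =
      (\<Sum>i<Suc n. (lam(n := c)) i *\<^sub>R herm_prod (cvec ((u1(n := x)) i)) (cvec ((u2(n := y)) i)))"
    unfolding H by simp
  then show ?thesis unfolding real_decomp_def by blast
qed

section \<open>The flattening bilinear form and a lower bound\<close>

definition flat_form :: "tensor22 \<Rightarrow> real^2^2 \<Rightarrow> real^2^2 \<Rightarrow> complex" where
  "flat_form H Z W = (\<Sum>i1\<in>UNIV. \<Sum>i2\<in>UNIV. \<Sum>j1\<in>UNIV. \<Sum>j2\<in>UNIV.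
      of_real (Z$i1$i2) * H$i1$i2$j1$j2 * of_real (W$j1$j2))"

lemma sum_UNIV_2x2: "(\<Sum>p\<in>(UNIV::(2\<times>2) set). f p) = f (1,1) + f (1,2) + f (2,1) + f (2,2)"
proof -
  have "(\<Sum>p\<in>(UNIV::(2\<times>2) set). f p) = (\<Sum>a\<in>UNIV. \<Sum>b\<in>UNIV. f (a,b))"
    by (simp add: sum.cartesian_product)
  then show ?thesis by (simp add: sum_2 add.assoc)
qed

definition flat_apply :: "tensor22 \<Rightarrow> real^2^2 \<Rightarrow> complex^(2\<times>2)" where
  "flat_apply H W = (\<chi> p. \<Sum>j1\<in>UNIV. \<Sum>j2\<in>UNIV. H$fst p$snd p$j1$j2 * of_real (W$j1$j2))"

lemma flat_apply_in_span:
  assumes "H = (\<Sum>i<r. lam i *\<^sub>R herm_prod (u1 i) (u2 i))"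
  shows "flat_apply H W \<in> vec.span ((\<lambda>i. \<chi> p. u1 i$fst p * u2 i$snd p) ` {..<r})"
proof -
  have "flat_apply H W = (\<Sum>i<r. (of_real (lam i) * (\<Sum>j1\<in>UNIV. \<Sum>j2\<in>UNIV.
      cnj (u1 i$j1) * cnj (u2 i$j2) * of_real (W$j1$j2))) *s (\<chi> p. u1 i$fst p * u2 i$snd p))"
    unfolding flat_apply_def assms
    by (simp add: vec_eq_iff herm_prod_def sum_2 sum.distrib)
      (simp add: scaleR_conv_of_real sum_distrib_left sum_distrib_right sum.distrib[symmetric] algebra_simps)
  also have "\<dots> \<in> vec.span ((\<lambda>i. \<chi> p. u1 i$fst p * u2 i$snd p) ` {..<r})"
    by (intro vec.span_sum vec.span_scale vec.span_base) auto
  finally show ?thesis .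
qed

text \<open>The vectors m(H) Z_l lie in a span of dimension at most r, and the diagonal pairing
  with the Z_l makes them linearly independent.\<close>
lemma herm_decomp_length_ge:
  fixes Z :: "nat \<Rightarrow> real^2^2"
  assumes H: "H = (\<Sum>i<r. lam i *\<^sub>R herm_prod (u1 i) (u2 i))"
    and diag: "\<And>l m. l < k \<Longrightarrow> m < k \<Longrightarrow> flat_form H (Z l) (Z m) = (if l = m then c l else 0)"
    and nonzero: "\<And>l. l < k \<Longrightarrow> c l \<noteq> 0"
  shows "k \<le> r"
proof -
  define y where "y l = flat_apply H (Z l)" for l
  define t :: "nat \<Rightarrow> complex^(2\<times>2)" where "t i = (\<chi> p. u1 i$fst p * u2 i$snd p)" for i
  define pair :: "nat \<Rightarrow> complex^(2\<times>2) \<Rightarrow> complex" where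
    "pair m v = (\<Sum>p\<in>UNIV. of_real (Z m $ fst p $ snd p) * v$p)" for m v
  have pair_y: "pair m (y l) = flat_form H (Z m) (Z l)" for m l
    by (simp add: pair_def y_def flat_apply_def flat_form_def sum_UNIV_2x2 sum_2 algebra_simps)
  have pair_sum: "pair m (\<Sum>v\<in>S. f v *s v) = (\<Sum>v\<in>S. f v * pair m v)" for m S f
    unfolding pair_def by (simp add: sum_distrib_left sum_distrib_right mult_ac, rule sum.swap)
  have inj: "inj_on y {..<k}"
  proof (rule inj_onI)
    fix l m assume "l \<in> {..<k}" "m \<in> {..<k}" "y l = y m"
    then have "flat_form H (Z m) (Z l) = flat_form H (Z m) (Z m)" by (simp flip: pair_y)
    then show "l = m" using diag[of m l] diag[of m m] nonzero[of m] \<open>l \<in> {..<k}\<close> \<open>m \<in> {..<k}\<close>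
      by (auto split: if_splits)
  qed
  have indep: "vec.independent (y ` {..<k})"
  proof (rule vec.independent_if_scalars_zero)
    fix f x assume eq: "(\<Sum>x\<in>y ` {..<k}. f x *s x) = 0" and x: "x \<in> y ` {..<k}"
    then obtain m where m: "m < k" "x = y m" by auto
    have "0 = pair m (\<Sum>x\<in>y ` {..<k}. f x *s x)" by (simp add: eq pair_def)
    also have "\<dots> = (\<Sum>l<k. f (y l) * flat_form H (Z m) (Z l))"
      by (simp only: pair_sum) (simp add: sum.reindex[OF inj] pair_y)
    also have "\<dots> = f (y m) * c m"
      using m diag by (simp add: if_distrib[of "(*) _"] sum.delta cong: if_cong)
    finally show "f x = 0" using nonzero[OF m(1)] m by simp
  qed simp
  have "y ` {..<k} \<subseteq> vec.span (t ` {..<r})"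
    using flat_apply_in_span[OF H] by (auto simp: y_def t_def)
  then have "card (y ` {..<k}) \<le> card (t ` {..<r})"
    using vec.independent_span_bound[OF _ indep] by auto
  also have "\<dots> \<le> r" using card_image_le[of "{..<r}" t] by simp
  finally show ?thesis using card_image[OF inj] by simp
qed

lemma flat_form_add: "flat_form (T + T') Z W = flat_form T Z W + flat_form T' Z W"
  by (simp add: flat_form_def algebra_simps sum.distrib)

lemma flat_form_scaleR: "flat_form (c *\<^sub>R T) Z W = of_real c * flat_form T Z W"
  by (simp add: flat_form_def sum_distrib_left mult_ac) (simp add: scaleR_conv_of_real)

lemma flat_form_sum:
  "flat_form (\<Sum>i<(n::nat). T i) Z W = (\<Sum>i<n. flat_form (T i) Z W)"
  by (induction n) (simp_all add: flat_form_add, simp add: flat_form_def)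

definition outer :: "real^2 \<Rightarrow> real^2 \<Rightarrow> real^2^2" where
  "outer x y = (\<chi> i j. x$i * y$j)"

lemma inner_vec_2: "x \<bullet> (y::real^2) = x$1 * y$1 + x$2 * y$2"
  by (simp add: inner_vec_def sum_2)

lemma inner_outer: "outer x y \<bullet> Z = x$1 * (y \<bullet> Z$1) + x$2 * (y \<bullet> Z$2)"
  by (simp add: inner_vec_def sum_2 outer_def algebra_simps)

lemma flat_form_herm_prod_cvec:
  "flat_form (herm_prod (cvec x) (cvec y)) Z W = of_real ((outer x y \<bullet> Z) * (outer x y \<bullet> W))"
  by (simp add: flat_form_def herm_prod_def cvec_def inner_outer inner_vec_2 sum_2 algebra_simps)

definition biorthogonal :: "(nat \<Rightarrow> 'a::real_inner) \<Rightarrow> (nat \<Rightarrow> 'a) \<Rightarrow> nat \<Rightarrow> bool" where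
  "biorthogonal v w n \<longleftrightarrow> (\<forall>i<n. \<forall>j<n. v i \<bullet> w j = (if i = j then 1 else 0))"

text \<open>A biorthogonal family exists iff the rank-one matrices x_i y_i^T are linearly independent.\<close>
definition indep_real_decomp :: "tensor22 \<Rightarrow> nat \<Rightarrow> bool" where
  "indep_real_decomp H n \<longleftrightarrow> (\<exists>(lam::nat \<Rightarrow> real) x y Z.
      H = (\<Sum>i<n. lam i *\<^sub>R herm_prod (cvec (x i)) (cvec (y i))) \<and>
      (\<forall>i<n. lam i \<noteq> 0) \<and> biorthogonal (\<lambda>i. outer (x i) (y i)) Z n)"

lemma real_decomp_if_indep_real_decomp: "indep_real_decomp H n \<Longrightarrow> real_decomp H n"
  unfolding indep_real_decomp_def real_decomp_def by blast

lemma hrank_eq_if_indep_real_decomp: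
  assumes "indep_real_decomp H n"
  shows "hrank H = n \<and> hrank_R H = n"
proof -
  obtain lam x y Z where H: "H = (\<Sum>i<n. lam i *\<^sub>R herm_prod (cvec (x i)) (cvec (y i)))"
    and lam: "\<forall>i<n. lam i \<noteq> 0" and bi: "biorthogonal (\<lambda>i. outer (x i) (y i)) Z n"
    using assms unfolding indep_real_decomp_def by blast
  have real: "real_decomp H n" using H unfolding real_decomp_def by blast
  have diag: "flat_form H (Z l) (Z m) = (if l = m then of_real (lam l) else 0)"
    if "l < n" "m < n" for l m
  proof -
    have "flat_form H (Z l) (Z m) =
        (\<Sum>i<n. of_real (lam i * ((outer (x i) (y i) \<bullet> Z l) * (outer (x i) (y i) \<bullet> Z m))))"
      by (simp add: H flat_form_sum flat_form_scaleR flat_form_herm_prod_cvec)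
    also have "\<dots> = (\<Sum>i<n. if i = l then (if l = m then of_real (lam l) else 0) else 0)"
      using bi that by (intro sum.cong) (auto simp: biorthogonal_def)
    finally show ?thesis using that by simp
  qed
  have "n \<le> hrank H"
    unfolding hrank_eq_Least
  proof (rule LeastI2[of "herm_decomp H"])
    show "herm_decomp H n" using real by (rule herm_decomp_if_real_decomp)
    fix r assume "herm_decomp H r"
    then obtain mu u1 u2 where "H = (\<Sum>i<r. mu i *\<^sub>R herm_prod (u1 i) (u2 i))"
      unfolding herm_decomp_def by blast
    then show "n \<le> r"
      by (rule herm_decomp_length_ge[where Z = Z and c = "\<lambda>l. of_real (lam l)"]) (use diag lam in auto)
  qed
  with hrank_le_hrank_R[OF real] hrank_R_le[OF real] show ?thesis by linarith
qed

section \<open>Real symmetric 2 x 2 matrices\<close>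

lemma symmetric_2_iff: "transpose M = M \<longleftrightarrow> M$1$2 = M$2$1"
  for M :: "'a^2^2"
  by (auto simp: vec_eq_iff forall_2 transpose_def)

lemma symmetric_2_entry: "transpose M = M \<Longrightarrow> M$2$1 = M$1$2"
  for M :: "'a^2^2"
  by (simp add: symmetric_2_iff)

lemma det_outer_sum:
  "det (a *\<^sub>R outer z z + b *\<^sub>R outer w w) = a * b * (z$1 * w$2 - z$2 * w$1)^2"
  by (simp add: det_2 outer_def power2_eq_square algebra_simps)

text \<open>For symmetric A this is the quadratic form of the adjugate of A.\<close>
definition adj_form :: "real^2^2 \<Rightarrow> real^2 \<Rightarrow> real" where
  "adj_form A w = A$2$2 * (w$1)^2 - 2 * A$1$2 * w$1 * w$2 + A$1$1 * (w$2)^2"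

lemma det_add_outer:
  assumes "transpose A = A"
  shows "det (A + t *\<^sub>R outer w w) = det A + t * adj_form A w"
  by (simp add: symmetric_2_entry[OF assms] det_2 adj_form_def outer_def power2_eq_square algebra_simps)

lemma adj_form_nonzero_exists:
  fixes A :: "real^2^2"
  assumes "transpose A = A" "A \<noteq> 0"
  obtains w where "adj_form A w \<noteq> 0"
proof (cases "A$1$1 = 0 \<and> A$2$2 = 0")
  case True
  with assms(2) have "A$1$2 \<noteq> 0"
    by (auto simp: symmetric_2_entry[OF assms(1)] vec_eq_iff forall_2)
  with True show ?thesis by (intro that[of "vector [1, 1]"]) (simp add: adj_form_def)
next
  case False
  then show ?thesis
    using that[of "vector [1, 0]"] that[of "vector [0, 1]"] by (auto simp: adj_form_def)
qed

lemma det_pos_entry_11_nonzero: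
  fixes A :: "real^2^2"
  assumes "transpose A = A" "det A > 0"
  shows "A$1$1 \<noteq> 0"
proof
  assume "A$1$1 = 0"
  then have "det A = - ((A$1$2)^2)" by (simp add: det_2 symmetric_2_entry[OF assms(1)] power2_eq_square)
  then show False using assms(2) zero_le_power2[of "A$1$2"] by linarith
qed

lemma adj_form_nonzero_if_det_pos:
  assumes "transpose A = A" "det A > 0" "w \<noteq> 0"
  shows "adj_form A w \<noteq> 0"
proof -
  have "A$1$1 * adj_form A w = (A$1$1 * w$2 - A$1$2 * w$1)^2 + det A * (w$1)^2"
    by (simp add: symmetric_2_entry[OF assms(1)] det_2 adj_form_def power2_eq_square algebra_simps)
  moreover have "(A$1$1 * w$2 - A$1$2 * w$1)^2 + det A * (w$1)^2 > 0"
  proof (cases "w$1 = 0")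
    case True
    with assms(3) have "w$2 \<noteq> 0" by (auto simp: vec_eq_iff forall_2)
    with True show ?thesis using det_pos_entry_11_nonzero[OF assms(1,2)] by simp
  next
    case False
    then show ?thesis using assms(2) by (intro add_nonneg_pos) auto
  qed
  ultimately show ?thesis by auto
qed

lemma symmetric_rank_one_if_det_eq_0:
  fixes S :: "real^2^2"
  assumes "transpose S = S" "det S = 0"
  obtains \<beta> w where "w \<noteq> 0" "S = \<beta> *\<^sub>R outer w w"
proof (cases "S$1$1 = 0")
  case True
  then have "S$1$2 = 0" using assms(2) by (simp add: det_2 symmetric_2_entry[OF assms(1)])
  then show ?thesis using True
    by (intro that[of "vector [0, 1]" "S$2$2"])
      (auto simp: vec_eq_iff forall_2 outer_def symmetric_2_entry[OF assms(1)])
next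
  case False
  have "S$2$2 = (S$1$2)^2 / S$1$1"
    using assms(2) False by (simp add: det_2 symmetric_2_entry[OF assms(1)] field_simps power2_eq_square)
  then show ?thesis using False
    by (intro that[of "vector [S$1$1, S$1$2]" "1 / S$1$1"])
      (auto simp: vec_eq_iff forall_2 outer_def symmetric_2_entry[OF assms(1)] power2_eq_square)
qed

lemma symmetric_split_rank_one:
  fixes A :: "real^2^2"
  assumes "transpose A = A" "det A \<noteq> 0" "adj_form A w \<noteq> 0"
  obtains a1 a2 z where "A = a1 *\<^sub>R outer z z + a2 *\<^sub>R outer w w"
    and "a1 \<noteq> 0" "a2 \<noteq> 0" "z$1 * w$2 - z$2 * w$1 \<noteq> 0"
proof -
  define a2 where "a2 = det A / adj_form A w"
  have "transpose (A - a2 *\<^sub>R outer w w) = A - a2 *\<^sub>R outer w w"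
    using assms(1) by (simp add: symmetric_2_iff outer_def mult.commute)
  moreover have "det (A - a2 *\<^sub>R outer w w) = 0"
    using det_add_outer[OF assms(1), of "- a2" w] assms(3) by (simp add: a2_def)
  ultimately obtain a1 z where "A - a2 *\<^sub>R outer w w = a1 *\<^sub>R outer z z"
    using symmetric_rank_one_if_det_eq_0 by metis
  then have A: "A = a1 *\<^sub>R outer z z + a2 *\<^sub>R outer w w" by (simp add: algebra_simps)
  then have "det A = a1 * a2 * (z$1 * w$2 - z$2 * w$1)^2" by (simp add: det_outer_sum)
  with assms(2) show thesis using that[OF A] by auto
qed

lemma dual_pair_exists:
  fixes z w :: "real^2"
  assumes "z$1 * w$2 - z$2 * w$1 \<noteq> 0"
  obtains \<zeta> \<xi> where "z \<bullet> \<zeta> = 1" "w \<bullet> \<zeta> = 0" "z \<bullet> \<xi> = 0" "w \<bullet> \<xi> = 1"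
proof -
  define D where "D = z$1 * w$2 - z$2 * w$1"
  show thesis
    using assms
    by (intro that[of "vector [w$2 / D, - w$1 / D]" "vector [- z$2 / D, z$1 / D]"])
      (simp_all add: inner_vec_2 D_def diff_divide_distrib[symmetric] add_divide_distrib[symmetric] mult_ac)
qed

lemma symmetric_rank_one_decomp:
  fixes S :: "real^2^2"
  assumes "transpose S = S"
  obtains s \<sigma> v \<nu> where "s \<le> 2" "S = (\<Sum>j<s. \<sigma> j *\<^sub>R outer (v j) (v j))"
    and "\<forall>j<s. \<sigma> j \<noteq> 0" "biorthogonal v \<nu> s"
proof (cases "det S = 0")
  case True
  then obtain \<beta> w where w: "w \<noteq> 0" and S: "S = \<beta> *\<^sub>R outer w w"
    using assms symmetric_rank_one_if_det_eq_0 by metis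
  show ?thesis
  proof (cases "\<beta> = 0")
    case True
    then show ?thesis by (intro that[of 0]) (simp_all add: S biorthogonal_def)
  next
    case False
    have "w \<bullet> ((1 / (w \<bullet> w)) *\<^sub>R w) = 1" using w by simp
    with False show ?thesis
      by (intro that[of 1 "\<lambda>_. \<beta>" "\<lambda>_. w" "\<lambda>_. (1 / (w \<bullet> w)) *\<^sub>R w"])
        (simp_all add: S biorthogonal_def)
  qed
next
  case False
  then have "S \<noteq> 0" by (auto simp: det_2)
  then obtain w where "adj_form S w \<noteq> 0" by (rule adj_form_nonzero_exists[OF assms])
  then obtain a1 a2 z where S: "S = a1 *\<^sub>R outer z z + a2 *\<^sub>R outer w w"
    and a: "a1 \<noteq> 0" "a2 \<noteq> 0" and D: "z$1 * w$2 - z$2 * w$1 \<noteq> 0"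
    by (rule symmetric_split_rank_one[OF assms False])
  obtain \<zeta> \<xi> where "z \<bullet> \<zeta> = 1" "w \<bullet> \<zeta> = 0" "z \<bullet> \<xi> = 0" "w \<bullet> \<xi> = 1"
    by (rule dual_pair_exists[OF D])
  then show ?thesis
    using that[of 2 "\<lambda>j. if j = 0 then a1 else a2" "\<lambda>j. if j = 0 then z else w"
        "\<lambda>j. if j = 0 then \<zeta> else \<xi>"] S a
    by (simp add: biorthogonal_def less_2_cases_iff numeral_2_eq_2)
qed

lemma pencil_singular:
  fixes A C :: "real^2^2"
  assumes "transpose A = A" "transpose C = C" "det A > 0"
  obtains g where "det (C - g *\<^sub>R A) = 0"
proof -
  define b where "b = 2 * A$1$2 * C$1$2 - A$1$1 * C$2$2 - A$2$2 * C$1$1"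
  have det: "det (C - g *\<^sub>R A) = det A * g^2 + b * g + det C" for g
    by (simp add: symmetric_2_entry[OF assms(1)] symmetric_2_entry[OF assms(2)] det_2 b_def
        power2_eq_square algebra_simps)
  have "(A$1$1)^2 * discrim (det A) b (det C) =
      ((A$1$1)^2 * C$2$2 - 2 * A$1$1 * A$1$2 * C$1$2 + 2 * (A$1$2)^2 * C$1$1 - A$1$1 * A$2$2 * C$1$1)^2
      + 4 * det A * (A$1$1 * C$1$2 - A$1$2 * C$1$1)^2"
    by (simp add: discrim_def symmetric_2_entry[OF assms(1)] symmetric_2_entry[OF assms(2)] det_2 b_def
        power2_eq_square algebra_simps)
  also have "\<dots> \<ge> 0" using assms(3) by (intro add_nonneg_nonneg) auto
  finally have "discrim (det A) b (det C) \<ge> 0"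
    using det_pos_entry_11_nonzero[OF assms(1,3)] by (simp add: zero_le_mult_iff)
  then obtain g where "det A * g^2 + b * g + det C = 0"
    using discriminant_nonneg_ex[of "det A" b "det C"] assms(3) by auto
  then show thesis by (intro that[of g]) (simp add: det)
qed

lemma det_pos_if_definite:
  fixes M :: "real^2^2"
  assumes "transpose M = M" "pos_def M \<or> neg_def M"
  shows "det M > 0"
proof -
  define e :: "real^2" where "e = vector [1, 0]"
  define v :: "real^2" where "v = vector [- M$1$2, M$1$1]"
  have e: "e \<noteq> 0" "e \<bullet> (M *v e) = M$1$1"
    by (simp_all add: e_def vec_eq_iff forall_2 inner_vec_2 matrix_vector_mult_def sum_2)
  have qv: "v \<bullet> (M *v v) = M$1$1 * det M"
    by (simp add: v_def inner_vec_2 matrix_vector_mult_def sum_2 det_2 symmetric_2_entry[OF assms(1)]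
        algebra_simps)
  have "M$1$1 \<noteq> 0"
  proof
    assume "M$1$1 = 0"
    with e assms(2) show False unfolding pos_def_def neg_def_def by (metis less_irrefl)
  qed
  then have v: "v \<noteq> 0" by (simp add: v_def vec_eq_iff forall_2)
  from assms(2) show ?thesis
  proof
    assume "pos_def M"
    then have "M$1$1 > 0" "M$1$1 * det M > 0" using e v qv unfolding pos_def_def by metis+
    then show ?thesis by (simp add: zero_less_mult_iff)
  next
    assume "neg_def M"
    then have "M$1$1 < 0" "M$1$1 * det M < 0" using e v qv unfolding neg_def_def by metis+
    then show ?thesis by (simp add: mult_less_0_iff)
  qed
qed

lemma rank_one_update_det_pos:
  fixes A :: "real^2^2"
  assumes "transpose A = A" "A \<noteq> 0"
  obtains \<mu> y where "det (A + \<mu> *\<^sub>R outer y y) > 0"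
proof -
  obtain y where y: "adj_form A y \<noteq> 0" by (rule adj_form_nonzero_exists[OF assms])
  have "det (A + ((1 - det A) / adj_form A y) *\<^sub>R outer y y) = 1"
    using y by (simp add: det_add_outer[OF assms(1)])
  then show thesis by (intro that[of "(1 - det A) / adj_form A y" y]) simp
qed

section \<open>Block tensors\<close>

definition block_tensor :: "real^2^2 \<Rightarrow> real^2^2 \<Rightarrow> real^2^2 \<Rightarrow> tensor22" where
  "block_tensor A B C = (\<chi> i1 i2 j1 j2. complex_of_real
     ((if i1 = 1 \<and> j1 = 1 then A else if i1 = 2 \<and> j1 = 2 then B else C) $ i2 $ j2))"

lemma one_neq_two_2 [simp]: "(1::2) \<noteq> 2" "(2::2) \<noteq> 1"
  by (simp_all add: eq_commute[of 2])

lemma flat_block_block_tensor [simp]: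
  "flat_block (block_tensor A B C) 1 1 = A" "flat_block (block_tensor A B C) 2 2 = B"
  by (simp_all add: vec_eq_iff flat_block_def hflat_def block_tensor_def)

lemma block_tensor_add:
  "block_tensor A B C + block_tensor A' B' C' = block_tensor (A + A') (B + B') (C + C')"
  by (simp add: vec_eq_iff forall_2 block_tensor_def)

lemma block_tensor_scaleR: "c *\<^sub>R block_tensor A B C = block_tensor (c *\<^sub>R A) (c *\<^sub>R B) (c *\<^sub>R C)"
  by (simp add: vec_eq_iff forall_2 block_tensor_def) (simp add: scaleR_conv_of_real)

lemma block_tensor_sum:
  "(\<Sum>i<(n::nat). block_tensor (f i) (g i) (h i)) =
    block_tensor (\<Sum>i<n. f i) (\<Sum>i<n. g i) (\<Sum>i<n. h i)"
  by (induction n) (simp_all add: block_tensor_add, simp add: vec_eq_iff forall_2 block_tensor_def)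

lemma herm_prod_cvec_eq_block_tensor:
  "herm_prod (cvec x) (cvec y) =
    block_tensor ((x$1)^2 *\<^sub>R outer y y) ((x$2)^2 *\<^sub>R outer y y) ((x$1 * x$2) *\<^sub>R outer y y)"
  by (simp add: vec_eq_iff forall_2 herm_prod_def cvec_def block_tensor_def outer_def power2_eq_square)

lemma sum_herm_prod_cvec_eq_block_tensor:
  "(\<Sum>i<(n::nat). lam i *\<^sub>R herm_prod (cvec (x i)) (cvec (y i))) =
    block_tensor (\<Sum>i<n. (lam i * (x i$1)^2) *\<^sub>R outer (y i) (y i))
      (\<Sum>i<n. (lam i * (x i$2)^2) *\<^sub>R outer (y i) (y i))
      (\<Sum>i<n. (lam i * (x i$1 * x i$2)) *\<^sub>R outer (y i) (y i))"
  by (simp add: herm_prod_cvec_eq_block_tensor block_tensor_scaleR block_tensor_sum)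

lemma RD22_block_tensor:
  assumes "H \<in> RD22"
  obtains A B C where "H = block_tensor A B C"
    and "transpose A = A" "transpose B = B" "transpose C = C"
proof -
  obtain n lam x y where "H = (\<Sum>i<(n::nat). lam i *\<^sub>R herm_prod (cvec (x i)) (cvec (y i)))"
    using assms by (auto simp: RD22_def)
  moreover have "transpose (\<Sum>i<n. c i *\<^sub>R outer (y i) (y i)) = (\<Sum>i<n. c i *\<^sub>R outer (y i) (y i))"
    for c :: "nat \<Rightarrow> real"
    by (simp add: symmetric_2_iff outer_def mult.commute)
  ultimately show thesis
    by (intro that) (simp_all only: sum_herm_prod_cvec_eq_block_tensor)
qed

definition flip2 :: "2 \<Rightarrow> 2" where
  "flip2 i = (if i = 1 then 2 else 1)"

lemma flip2_simps [simp]: "flip2 1 = 2" "flip2 2 = 1"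
  by (simp_all add: flip2_def)

definition flip_vec :: "'a^2 \<Rightarrow> 'a^2" where
  "flip_vec u = (\<chi> i. u $ flip2 i)"

definition swap_first :: "tensor22 \<Rightarrow> tensor22" where
  "swap_first H = (\<chi> i1 i2 j1 j2. H $ flip2 i1 $ i2 $ flip2 j1 $ j2)"

lemma swap_first_block_tensor: "swap_first (block_tensor A B C) = block_tensor B A C"
  by (simp add: swap_first_def vec_eq_iff forall_2 block_tensor_def)

lemma swap_first_sum_herm_prod_cvec:
  "swap_first (\<Sum>i<(n::nat). lam i *\<^sub>R herm_prod (cvec (x i)) (cvec (y i))) =
    (\<Sum>i<n. lam i *\<^sub>R herm_prod (cvec (flip_vec (x i))) (cvec (y i)))"
  by (simp add: swap_first_def vec_eq_iff herm_prod_def cvec_def flip_vec_def)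

lemma outer_flip_vec_inner: "outer (flip_vec x) y \<bullet> flip_vec Z = outer x y \<bullet> Z"
  by (simp add: inner_outer flip_vec_def)

lemma indep_real_decomp_swap_first:
  assumes "indep_real_decomp H n"
  shows "indep_real_decomp (swap_first H) n"
proof -
  obtain lam x y Z where H: "H = (\<Sum>i<n. lam i *\<^sub>R herm_prod (cvec (x i)) (cvec (y i)))"
    and "\<forall>i<n. lam i \<noteq> 0" and "biorthogonal (\<lambda>i. outer (x i) (y i)) Z n"
    using assms unfolding indep_real_decomp_def by blast
  moreover have "swap_first H = (\<Sum>i<n. lam i *\<^sub>R herm_prod (cvec (flip_vec (x i))) (cvec (y i)))"
    unfolding H by (rule swap_first_sum_herm_prod_cvec)
  ultimately show ?thesis
    unfolding indep_real_decomp_def biorthogonal_def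
    by (intro exI[of _ lam] exI[of _ "\<lambda>i. flip_vec (x i)"] exI[of _ y] exI[of _ "\<lambda>i. flip_vec (Z i)"])
      (simp add: outer_flip_vec_inner)
qed

section \<open>Explicit decompositions\<close>

lemma sum_lessThan_add_2: "(\<Sum>i<n + 2. f i) = f 0 + f 1 + (\<Sum>j<n. f (j + 2))"
  for f :: "nat \<Rightarrow> 'a::comm_monoid_add"
  by (induction n) (simp_all add: numeral_2_eq_2 add.assoc)

lemma sum_lessThan_mult_2: "(\<Sum>i<2 * n. f i) = (\<Sum>j<n. f (2 * j) + f (2 * j + 1))"
  for f :: "nat \<Rightarrow> 'a::comm_monoid_add"
  by (induction n) (simp_all add: add.assoc)

lemma indep_real_decomp_normal_form:
  fixes z w \<zeta> \<xi> :: "real^2" and v \<nu> :: "nat \<Rightarrow> real^2"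
  assumes "a1 \<noteq> 0" "a2 \<noteq> 0"
    and dual: "z \<bullet> \<zeta> = 1" "w \<bullet> \<zeta> = 0" "z \<bullet> \<xi> = 0" "w \<bullet> \<xi> = 1"
    and "\<forall>j<s. \<sigma> j \<noteq> 0" and bi: "biorthogonal v \<nu> s"
  shows "indep_real_decomp (block_tensor
      (a1 *\<^sub>R outer z z + a2 *\<^sub>R outer w w)
      ((a1 * g1^2) *\<^sub>R outer z z + (a2 * g2^2) *\<^sub>R outer w w + (\<Sum>j<s. \<sigma> j *\<^sub>R outer (v j) (v j)))
      ((a1 * g1) *\<^sub>R outer z z + (a2 * g2) *\<^sub>R outer w w)) (s + 2)"
proof -
  define lam where "lam i = (if i = 0 then a1 else if i = 1 then a2 else \<sigma> (i - 2))" for i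
  define x :: "nat \<Rightarrow> real^2" where
    "x i = (if i = 0 then vector [1, g1] else if i = 1 then vector [1, g2] else vector [0, 1])" for i
  define y where "y i = (if i = 0 then z else if i = 1 then w else v (i - 2))" for i
  define P where "P u = (- g1 * (z \<bullet> u)) *\<^sub>R \<zeta> + (- g2 * (w \<bullet> u)) *\<^sub>R \<xi>" for u
  define Z :: "nat \<Rightarrow> real^2^2" where
    "Z i = (if i = 0 then vector [\<zeta>, 0] else if i = 1 then vector [\<xi>, 0]
      else vector [P (\<nu> (i - 2)), \<nu> (i - 2)])" for i
  have "block_tensor
      (a1 *\<^sub>R outer z z + a2 *\<^sub>R outer w w)
      ((a1 * g1^2) *\<^sub>R outer z z + (a2 * g2^2) *\<^sub>R outer w w + (\<Sum>j<s. \<sigma> j *\<^sub>R outer (v j) (v j)))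
      ((a1 * g1) *\<^sub>R outer z z + (a2 * g2) *\<^sub>R outer w w) =
      (\<Sum>i<s + 2. lam i *\<^sub>R herm_prod (cvec (x i)) (cvec (y i)))"
    unfolding sum_herm_prod_cvec_eq_block_tensor sum_lessThan_add_2 by (simp add: lam_def x_def y_def)
  moreover have "\<forall>i<s + 2. lam i \<noteq> 0" using assms by (auto simp: lam_def)
  moreover have "biorthogonal (\<lambda>i. outer (x i) (y i)) Z (s + 2)"
    using bi dual
    by (auto simp: biorthogonal_def inner_outer x_def y_def Z_def P_def algebra_simps)
  ultimately show ?thesis unfolding indep_real_decomp_def by blast
qed

lemma indep_real_decomp_zero_diagonal:
  fixes C :: "real^2^2"
  assumes "transpose C = C"
  obtains n where "n \<le> 4" "indep_real_decomp (block_tensor 0 0 C) n"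
proof -
  obtain s \<sigma> v \<nu> where "s \<le> 2" and C: "C = (\<Sum>j<s. \<sigma> j *\<^sub>R outer (v j) (v j))"
    and "\<forall>j<s. \<sigma> j \<noteq> 0" and bi: "biorthogonal v \<nu> s"
    by (rule symmetric_rank_one_decomp[OF assms])
  define lam where "lam i = (-1) ^ i * \<sigma> (i div 2) / 2" for i
  define x :: "nat \<Rightarrow> real^2" where "x i = vector [1, (-1) ^ i]" for i
  define y where "y i = v (i div 2)" for i
  define Z :: "nat \<Rightarrow> real^2^2" where
    "Z i = vector [(1 / 2) *\<^sub>R \<nu> (i div 2), ((-1) ^ i / 2) *\<^sub>R \<nu> (i div 2)]" for i
  have "block_tensor 0 0 C = (\<Sum>i<2 * s. lam i *\<^sub>R herm_prod (cvec (x i)) (cvec (y i)))"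
    unfolding sum_herm_prod_cvec_eq_block_tensor sum_lessThan_mult_2
    by (simp add: C lam_def x_def y_def flip: scaleR_add_left)
  moreover have "\<forall>i<2 * s. lam i \<noteq> 0" using \<open>\<forall>j<s. \<sigma> j \<noteq> 0\<close> by (simp add: lam_def)
  moreover have "biorthogonal (\<lambda>i. outer (x i) (y i)) Z (2 * s)"
    unfolding biorthogonal_def
  proof (intro allI impI)
    fix i l assume "i < 2 * s" "l < 2 * s"
    then have "v (i div 2) \<bullet> \<nu> (l div 2) = (if i div 2 = l div 2 then 1 else 0)"
      using bi by (simp add: biorthogonal_def)
    moreover have "i div 2 = l div 2 \<Longrightarrow> i \<noteq> l \<Longrightarrow> odd (i + l)" by presburger
    ultimately show "outer (x i) (y i) \<bullet> Z l = (if i = l then 1 else 0)"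
      by (auto simp: inner_outer x_def y_def Z_def power_add[symmetric] minus_one_power_iff)
  qed
  ultimately have "indep_real_decomp (block_tensor 0 0 C) (2 * s)"
    unfolding indep_real_decomp_def by blast
  with \<open>s \<le> 2\<close> show thesis by (intro that[of "2 * s"]) simp_all
qed

lemma indep_real_decomp_if_det_A_pos:
  fixes A B C :: "real^2^2"
  assumes sym: "transpose A = A" "transpose B = B" "transpose C = C" and "det A > 0"
  obtains n where "n \<le> 4" "indep_real_decomp (block_tensor A B C) n"
proof -
  obtain g where "det (C - g *\<^sub>R A) = 0" by (rule pencil_singular[OF sym(1,3) \<open>det A > 0\<close>])
  moreover have "transpose (C - g *\<^sub>R A) = C - g *\<^sub>R A"
    using sym by (simp add: symmetric_2_iff)
  ultimately obtain b w where "w \<noteq> 0" and Cg: "C - g *\<^sub>R A = b *\<^sub>R outer w w"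
    using symmetric_rank_one_if_det_eq_0 by metis
  have "adj_form A w \<noteq> 0" by (rule adj_form_nonzero_if_det_pos[OF sym(1) \<open>det A > 0\<close> \<open>w \<noteq> 0\<close>])
  then obtain a1 a2 z where A: "A = a1 *\<^sub>R outer z z + a2 *\<^sub>R outer w w"
    and "a1 \<noteq> 0" "a2 \<noteq> 0" and D: "z$1 * w$2 - z$2 * w$1 \<noteq> 0"
    using symmetric_split_rank_one[OF sym(1)] \<open>det A > 0\<close> by (metis less_irrefl)
  obtain \<zeta> \<xi> where "z \<bullet> \<zeta> = 1" "w \<bullet> \<zeta> = 0" "z \<bullet> \<xi> = 0" "w \<bullet> \<xi> = 1"
    by (rule dual_pair_exists[OF D])
  define g2 where "g2 = g + b / a2"
  have "C = g *\<^sub>R A + b *\<^sub>R outer w w" using Cg by (simp add: algebra_simps)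
  also have "\<dots> = (a1 * g) *\<^sub>R outer z z + (a2 * g2) *\<^sub>R outer w w"
    using \<open>a2 \<noteq> 0\<close> by (simp add: A g2_def algebra_simps flip: scaleR_add_left)
  finally have C: "C = (a1 * g) *\<^sub>R outer z z + (a2 * g2) *\<^sub>R outer w w" .
  define S where "S = B - (a1 * g^2) *\<^sub>R outer z z - (a2 * g2^2) *\<^sub>R outer w w"
  have "transpose S = S"
    using sym(2) by (simp add: S_def symmetric_2_iff outer_def mult.commute)
  then obtain s \<sigma> v \<nu> where "s \<le> 2" and "S = (\<Sum>j<s. \<sigma> j *\<^sub>R outer (v j) (v j))"
    and "\<forall>j<s. \<sigma> j \<noteq> 0" "biorthogonal v \<nu> s"
    by (rule symmetric_rank_one_decomp)
  then have B: "B = (a1 * g^2) *\<^sub>R outer z z + (a2 * g2^2) *\<^sub>R outer w w + (\<Sum>j<s. \<sigma> j *\<^sub>R outer (v j) (v j))"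
    by (simp add: S_def algebra_simps)
  have "indep_real_decomp (block_tensor A B C) (s + 2)"
    unfolding A B C by (rule indep_real_decomp_normal_form) fact+
  with \<open>s \<le> 2\<close> show thesis by (intro that[of "s + 2"]) simp_all
qed

lemma indep_real_decomp_le_4:
  fixes A B C :: "real^2^2"
  assumes sym: "transpose A = A" "transpose B = B" "transpose C = C"
    and "det A > 0 \<or> det B > 0 \<or> (A = 0 \<and> B = 0)"
  obtains n where "n \<le> 4" "indep_real_decomp (block_tensor A B C) n"
proof -
  consider "det A > 0" | "det B > 0" | "A = 0" "B = 0" using assms(4) by blast
  then show thesis
  proof cases
    case 1
    then show thesis using indep_real_decomp_if_det_A_pos[OF sym] that by metis
  next
    case 2
    then obtain n where "n \<le> 4" "indep_real_decomp (block_tensor B A C) n"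
      using indep_real_decomp_if_det_A_pos[OF sym(2,1,3)] by metis
    then show thesis
      using that indep_real_decomp_swap_first swap_first_block_tensor by metis
  next
    case 3
    then show thesis using indep_real_decomp_zero_diagonal[OF sym(3)] that by metis
  qed
qed

lemma real_decomp_swap_first:
  assumes "real_decomp H n"
  shows "real_decomp (swap_first H) n"
proof -
  obtain lam x y where "H = (\<Sum>i<n. lam i *\<^sub>R herm_prod (cvec (x i)) (cvec (y i)))"
    using assms unfolding real_decomp_def by blast
  then show ?thesis
    unfolding real_decomp_def
    by (intro exI[of _ lam] exI[of _ "\<lambda>i. flip_vec (x i)"] exI[of _ y]) (simp add: swap_first_sum_herm_prod_cvec)
qed

lemma real_decomp_le_5_if_A_nonzero:
  fixes A B C :: "real^2^2"
  assumes sym: "transpose A = A" "transpose B = B" "transpose C = C" and "A \<noteq> 0"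
  obtains n where "n \<le> 5" "real_decomp (block_tensor A B C) n"
proof -
  obtain \<mu> y where det: "det (A + \<mu> *\<^sub>R outer y y) > 0"
    by (rule rank_one_update_det_pos[OF sym(1) \<open>A \<noteq> 0\<close>])
  have "transpose (A + \<mu> *\<^sub>R outer y y) = A + \<mu> *\<^sub>R outer y y"
    using sym(1) by (simp add: symmetric_2_iff outer_def mult.commute)
  then obtain n where "n \<le> 4" and indep: "indep_real_decomp (block_tensor (A + \<mu> *\<^sub>R outer y y) B C) n"
    by (rule indep_real_decomp_le_4[OF _ sym(2,3) disjI1[OF det]])
  have eq: "block_tensor A B C =
      block_tensor (A + \<mu> *\<^sub>R outer y y) B C + (- \<mu>) *\<^sub>R herm_prod (cvec (vector [1, 0])) (cvec y)"
    by (simp add: herm_prod_cvec_eq_block_tensor block_tensor_scaleR block_tensor_add)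
  have "real_decomp (block_tensor A B C) (Suc n)"
    unfolding eq by (rule real_decomp_add_single[OF real_decomp_if_indep_real_decomp[OF indep]])
  with \<open>n \<le> 4\<close> show thesis by (intro that[of "Suc n"]) simp_all
qed

lemma real_decomp_le_5:
  fixes A B C :: "real^2^2"
  assumes sym: "transpose A = A" "transpose B = B" "transpose C = C"
  obtains n where "n \<le> 5" "real_decomp (block_tensor A B C) n"
proof -
  consider "A = 0" "B = 0" | "A \<noteq> 0" | "B \<noteq> 0" by blast
  then show thesis
  proof cases
    case 1
    obtain n where "n \<le> 4" "indep_real_decomp (block_tensor A B C) n"
      by (rule indep_real_decomp_le_4[OF sym]) (simp add: 1)
    then show thesis by (intro that[of n]) (simp_all add: real_decomp_if_indep_real_decomp)
  next
    case 2
    show thesis by (rule real_decomp_le_5_if_A_nonzero[OF sym 2 that])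
  next
    case 3
    then obtain n where "n \<le> 5" and real: "real_decomp (block_tensor B A C) n"
      by (rule real_decomp_le_5_if_A_nonzero[OF sym(2,1,3)])
    have "real_decomp (block_tensor A B C) n"
      using real_decomp_swap_first[OF real] by (simp add: swap_first_block_tensor)
    with \<open>n \<le> 5\<close> show thesis by (rule that)
  qed
qed

theorem theorem4p3:
  fixes H :: tensor22
  defines "A \<equiv> flat_block H 1 1" and "B \<equiv> flat_block H 2 2"
  assumes "H \<in> RD22"
  shows "hrank_R H \<le> 5 \<and>
    ((pos_def A \<or> neg_def A \<or> pos_def B \<or> neg_def B \<or> (A = 0 \<and> B = 0)) \<longrightarrow>
       hrank H = hrank_R H \<and> hrank_R H \<le> 4)"
proof -
  obtain A' B' C where H: "H = block_tensor A' B' C"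
    and sym: "transpose A' = A'" "transpose B' = B'" "transpose C = C"
    by (rule RD22_block_tensor[OF assms(3)])
  have AB: "A = A'" "B = B'" by (simp_all add: A_def B_def H)
  obtain n where "n \<le> 5" "real_decomp H n" using real_decomp_le_5[OF sym] H by metis
  then have "hrank_R H \<le> 5" using hrank_R_le by fastforce
  moreover have "hrank H = hrank_R H \<and> hrank_R H \<le> 4"
    if "pos_def A \<or> neg_def A \<or> pos_def B \<or> neg_def B \<or> (A = 0 \<and> B = 0)"
  proof -
    have "det A' > 0 \<or> det B' > 0 \<or> (A' = 0 \<and> B' = 0)"
      using that det_pos_if_definite[OF sym(1)] det_pos_if_definite[OF sym(2)] unfolding AB by blast
    then obtain k where "k \<le> 4" "indep_real_decomp H k"
      using indep_real_decomp_le_4[OF sym] H by metis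
    then show ?thesis using hrank_eq_if_indep_real_decomp by fastforce
  qed
  ultimately show ?thesis by blast
qed

end
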